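(* Let $\Sigma$ be a connected orientable compact surface with $n$ boundary components $\{1,\dots,n\}$, $T$ an ideal triangulation with edges $E$ and faces $F$, and $l^0\in\mathbb{R}_{>0}^{|E|}$ a hyperbolic metric on $(\Sigma,T)$. The combinatorial Yamabe flow $$\frac{dw_i(t)}{dt}=B_i(t),\qquad w_i(0)=0,\qquad i=1,\dots,n,$$ has a solution for $t\in[0,\infty)$. Along this flow, the initial hyperbolic surface with geodesic boundary converges to a complete hyperbolic surface with cusps (i.e. the boundary lengths $B_i(t)$ tend to $0$ and each face's right-angled hexagon converges to a hyperbolic ideal triangle as $t\to\infty$).
   Context: An ideal triangulation: glue finitely many hexagons, each with three pairwise non-adjacent sides colored red, along red sides in pairs; faces are the images of hexagons, edges the images of red sides. Each edge joins boundary components $i,j$ and is denoted $ij$; each face meets boundary components $i,j,k$ and is denoted $ijk$. A hyperbolic metric is a vector $l\in\mathbb{R}_{>0}^{|E|}$; each face $ijk$ is realized as the unique hyperbolic right-angled hexagon with pairwise non-adjacent sides of lengths $l_{jk},l_{ki},l_{ij}$, and $\theta^i_{jk}$ is the length of the side on boundary component $i$ (opposite to $jk$). For $w\in\mathbb{R}^n$, the metric $l$ is defined by $\cosh\frac{l_{ij}}{2}=e^{w_i+w_j}\cosh\frac{l^0_{ij}}{2}$ (required positive), and $B_i=\sum_{ijk\in F}\theta^i_{jk}$ is the length of boundary component $i$. *)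

theory Defs
  imports "HOL-Analysis.Analysis"
begin

text \<open>Faces are a finite set F of hexagons;
each face f has red sides (slots) (f,m), m < 3, carrying the edge  edge f m, and
boundary arcs (corners) (f,k), k < 3, the corner k being opposite to the side k.
All hexagons are oriented consistently (cyclic order 0,1,2) and the two sides carrying
the same edge are glued orientation-reversingly.  bc f k is the boundary component
containing corner (f,k).\<close>

definition glued :: "'f set \<Rightarrow> ('f \<Rightarrow> nat \<Rightarrow> 'e) \<Rightarrow> 'f \<Rightarrow> nat \<Rightarrow> 'f \<Rightarrow> nat \<Rightarrow> bool" where
  "glued F edge f m g m' \<longleftrightarrow>
     f \<in> F \<and> g \<in> F \<and> m < 3 \<and> m' < 3 \<and> (f, m) \<noteq> (g, m') \<and> edge f m = edge g m'"

text \<open>Identification of corners induced by gluing: the endpoint of side (f,m) at corner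
m+1 meets the endpoint of side (g,m') at corner m'+2, and vice versa.\<close>
definition corner_step :: "'f set \<Rightarrow> ('f \<Rightarrow> nat \<Rightarrow> 'e) \<Rightarrow> (('f \<times> nat) \<times> ('f \<times> nat)) set" where
  "corner_step F edge =
     {((f, (m + 1) mod 3), (g, (m' + 2) mod 3)) | f m g m'. glued F edge f m g m'} \<union>
     {((f, (m + 2) mod 3), (g, (m' + 1) mod 3)) | f m g m'. glued F edge f m g m'}"

definition ideal_triangulation ::
  "nat \<Rightarrow> 'f set \<Rightarrow> 'e set \<Rightarrow> ('f \<Rightarrow> nat \<Rightarrow> 'e) \<Rightarrow> ('f \<Rightarrow> nat \<Rightarrow> nat) \<Rightarrow> bool" where
  "ideal_triangulation n F E edge bc \<longleftrightarrow>
     finite F \<and> F \<noteq> {} \<and> finite E \<and>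
     (\<forall>f\<in>F. \<forall>m<3. edge f m \<in> E) \<and>
     (\<forall>e\<in>E. card {(f, m). f \<in> F \<and> m < 3 \<and> edge f m = e} = 2) \<and>
     \<comment> \<open>boundary components = classes of corners under the gluing identification\<close>
     (\<forall>f\<in>F. \<forall>k<3. \<forall>g\<in>F. \<forall>k'<3.
        ((f, k), (g, k')) \<in> (corner_step F edge)\<^sup>* \<longleftrightarrow> bc f k = bc g k') \<and>
     (\<lambda>(f, k). bc f k) ` (F \<times> {..<3}) = {1..n} \<and>
     \<comment> \<open>connectedness\<close>
     (\<forall>f\<in>F. \<forall>g\<in>F. (f, g) \<in> {(f', g'). \<exists>m m'. glued F edge f' m g' m'}\<^sup>*)"

text \<open>Length of the red side (f,m) (edge joining components bc f (m+1), bc f (m+2))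
for the conformal factor w: cosh(l/2) = e^(w_i+w_j) cosh(l0/2).\<close>
definition len_arg :: "('e \<Rightarrow> real) \<Rightarrow> ('f \<Rightarrow> nat \<Rightarrow> 'e) \<Rightarrow> ('f \<Rightarrow> nat \<Rightarrow> nat)
    \<Rightarrow> (nat \<Rightarrow> real) \<Rightarrow> 'f \<Rightarrow> nat \<Rightarrow> real" where
  "len_arg l0 edge bc w f m =
     exp (w (bc f ((m + 1) mod 3)) + w (bc f ((m + 2) mod 3))) * cosh (l0 (edge f m) / 2)"

definition edge_len :: "('e \<Rightarrow> real) \<Rightarrow> ('f \<Rightarrow> nat \<Rightarrow> 'e) \<Rightarrow> ('f \<Rightarrow> nat \<Rightarrow> nat)
    \<Rightarrow> (nat \<Rightarrow> real) \<Rightarrow> 'f \<Rightarrow> nat \<Rightarrow> real" where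
  "edge_len l0 edge bc w f m = 2 * arcosh (len_arg l0 edge bc w f m)"

text \<open>w gives a hyperbolic metric: all lengths l_ij defined and positive.\<close>
definition admissible :: "'f set \<Rightarrow> ('e \<Rightarrow> real) \<Rightarrow> ('f \<Rightarrow> nat \<Rightarrow> 'e) \<Rightarrow> ('f \<Rightarrow> nat \<Rightarrow> nat)
    \<Rightarrow> (nat \<Rightarrow> real) \<Rightarrow> bool" where
  "admissible F l0 edge bc w \<longleftrightarrow> (\<forall>f\<in>F. \<forall>m<3. len_arg l0 edge bc w f m > 1)"

text \<open>Right-angled hexagon with alternate sides a, b, c: length of the side opposite a.\<close>
definition hex_side :: "real \<Rightarrow> real \<Rightarrow> real \<Rightarrow> real" where
  "hex_side a b c = arcosh ((cosh a + cosh b * cosh c) / (sinh b * sinh c))"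

definition theta :: "('e \<Rightarrow> real) \<Rightarrow> ('f \<Rightarrow> nat \<Rightarrow> 'e) \<Rightarrow> ('f \<Rightarrow> nat \<Rightarrow> nat)
    \<Rightarrow> (nat \<Rightarrow> real) \<Rightarrow> 'f \<Rightarrow> nat \<Rightarrow> real" where
  "theta l0 edge bc w f k =
     hex_side (edge_len l0 edge bc w f k) (edge_len l0 edge bc w f ((k + 1) mod 3))
              (edge_len l0 edge bc w f ((k + 2) mod 3))"

definition bdry_len :: "'f set \<Rightarrow> ('e \<Rightarrow> real) \<Rightarrow> ('f \<Rightarrow> nat \<Rightarrow> 'e) \<Rightarrow> ('f \<Rightarrow> nat \<Rightarrow> nat)
    \<Rightarrow> (nat \<Rightarrow> real) \<Rightarrow> nat \<Rightarrow> real" where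
  "bdry_len F l0 edge bc w i =
     (\<Sum>f\<in>F. \<Sum>k<3. if bc f k = i then theta l0 edge bc w f k else 0)"

definition yamabe_solution :: "nat \<Rightarrow> 'f set \<Rightarrow> ('e \<Rightarrow> real) \<Rightarrow> ('f \<Rightarrow> nat \<Rightarrow> 'e)
    \<Rightarrow> ('f \<Rightarrow> nat \<Rightarrow> nat) \<Rightarrow> (real \<Rightarrow> nat \<Rightarrow> real) \<Rightarrow> bool" where
  "yamabe_solution n F l0 edge bc w \<longleftrightarrow>
     (\<forall>i\<in>{1..n}. w 0 i = 0) \<and>
     (\<forall>t\<ge>0. admissible F l0 edge bc (w t)) \<and>
     (\<forall>i\<in>{1..n}. \<forall>t\<ge>0.
        ((\<lambda>s. w s i) has_real_derivative bdry_len F l0 edge bc (w t) i) (at t within {0..}))"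

end

theory Submission
  imports Defs
begin

text \<open>
  Every boundary length B_i is nonnegative, so the flow only increases the w_i; on the
  region w \<ge> 0 the B_i are bounded by a constant and Lipschitz on every box [0, K]^n.
  Picard iteration therefore converges on every interval [0, T] and yields a solution for
  all times.

  For the asymptotics, the hexagon formula
  cosh theta^i_jk = (cosh l_jk + cosh l_ij cosh l_ik) / (sinh l_ij sinh l_ik), together with
  cosh (l_ij / 2) = e^(w_i + w_j) cosh (l0_ij / 2), squeezes cosh theta^i_jk - 1 between two
  constant multiples of e^(-4 w_i). The lower bound keeps B_i away from 0 as long as w_i is
  bounded, so every w_i tends to infinity; the upper bound then forces theta^i_jk \<rightarrow> 0,
  hence B_i \<rightarrow> 0, while all edge lengths grow without bound.
\<close>

section \<open>Right-angled hexagons\<close>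

lemma cosh_double_arcosh: "1 \<le> (x::real) \<Longrightarrow> cosh (2 * arcosh x) = 2 * x\<^sup>2 - 1"
  by (simp add: cosh_double_cosh)

lemma hex_side_arg_ge_one:
  fixes a b c :: real
  assumes "0 < b" "0 < c"
  shows "1 \<le> (cosh a + cosh b * cosh c) / (sinh b * sinh c)"
proof -
  have "sinh b * sinh c < cosh b * cosh c"
    using assms sinh_less_cosh_real by (intro mult_strict_mono) auto
  hence "sinh b * sinh c \<le> cosh a + cosh b * cosh c"
    using cosh_real_pos[of a] by linarith
  moreover have "0 < sinh b * sinh c" using assms by simp
  ultimately show ?thesis by simp
qed

lemma hex_side_nonneg: "0 < b \<Longrightarrow> 0 < c \<Longrightarrow> 0 \<le> hex_side a b c"
  unfolding hex_side_def by (intro arcosh_nonneg_real hex_side_arg_ge_one)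

lemma hex_side_cosh:
  fixes a b c :: real
  assumes "0 < b" "0 < c"
  shows "cosh (hex_side a b c) = (cosh a + cosh b * cosh c) / (sinh b * sinh c)"
  using hex_side_arg_ge_one[OF assms] unfolding hex_side_def by simp

lemma cosh_diff_le:
  fixes b c :: real
  assumes "0 \<le> b" "0 \<le> c"
  shows "cosh (b - c) \<le> cosh b / cosh c + cosh c / cosh b"
proof -
  have "cosh (b - c) * (cosh b * cosh c) \<le> cosh (b - c) * cosh (b + c)"
    using assms by (intro mult_left_mono) (auto simp: cosh_add less_imp_le)
  also have "\<dots> = (cosh b)\<^sup>2 * (cosh c)\<^sup>2 - (sinh b)\<^sup>2 * (sinh c)\<^sup>2"
    unfolding cosh_diff cosh_add by (simp add: power2_eq_square algebra_simps)
  also have "\<dots> \<le> (cosh b)\<^sup>2 + (cosh c)\<^sup>2"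
    unfolding sinh_square_eq by (simp add: algebra_simps)
  finally show ?thesis using cosh_real_pos[of b] cosh_real_pos[of c]
    by (simp add: field_simps power2_eq_square)
qed

lemma hex_side_cosh_minus_one:
  fixes a b c :: real
  assumes "0 < b" "0 < c"
  shows "cosh (hex_side a b c) - 1 = (cosh a + cosh (b - c)) / (sinh b * sinh c)"
  using assms by (simp add: hex_side_cosh cosh_diff field_simps)

lemma hex_side_lower:
  fixes a b c :: real
  assumes "0 < b" "0 < c"
  shows "cosh a / (cosh b * cosh c) \<le> cosh (hex_side a b c) - 1"
proof -
  have "cosh a / (cosh b * cosh c) \<le> cosh a / (sinh b * sinh c)"
    using assms sinh_le_cosh_real by (intro divide_left_mono mult_mono) auto
  also have "\<dots> \<le> (cosh a + cosh (b - c)) / (sinh b * sinh c)"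
    using assms by (intro divide_right_mono) auto
  finally show ?thesis using hex_side_cosh_minus_one[OF assms] by simp
qed

lemma hex_side_upper:
  fixes a b c \<kappa> :: real
  assumes "0 < b" "0 < c" "0 < \<kappa>" "\<kappa> * (cosh b * cosh c) \<le> sinh b * sinh c"
  shows "cosh (hex_side a b c) - 1
    \<le> (cosh a / (cosh b * cosh c) + 1 / (cosh b)\<^sup>2 + 1 / (cosh c)\<^sup>2) / \<kappa>"
proof -
  have "cosh (hex_side a b c) - 1 \<le> (cosh a + cosh b / cosh c + cosh c / cosh b) / (sinh b * sinh c)"
    unfolding hex_side_cosh_minus_one[OF assms(1,2)] using assms cosh_diff_le[of b c]
    by (intro divide_right_mono) auto
  also have "\<dots> \<le> (cosh a + cosh b / cosh c + cosh c / cosh b) / (\<kappa> * (cosh b * cosh c))"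
    using assms by (intro divide_left_mono add_nonneg_nonneg mult_pos_pos) auto
  also have "\<dots> = (cosh a / (cosh b * cosh c) + 1 / (cosh b)\<^sup>2 + 1 / (cosh c)\<^sup>2) / \<kappa>"
    by (simp add: field_simps power2_eq_square)
  finally show ?thesis .
qed

lemma arcosh_real_mono: "1 \<le> (x::real) \<Longrightarrow> x \<le> y \<Longrightarrow> arcosh x \<le> arcosh y"
  using arcosh_less_iff_real[of y x] by (auto simp del: arcosh_less_iff_real)

lemma hex_side_double_arcosh_lower:
  fixes x0 x1 x2 :: real
  assumes "1 \<le> x0" "1 < x1" "1 < x2"
  shows "x0\<^sup>2 / (4 * x1\<^sup>2 * x2\<^sup>2) \<le> cosh (hex_side (2 * arcosh x0) (2 * arcosh x1) (2 * arcosh x2)) - 1"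
proof -
  have "1 \<le> x0\<^sup>2" "1 < x1\<^sup>2" "1 < x2\<^sup>2"
    using assms by (auto intro: one_less_power)
  hence "(2 * x1\<^sup>2 - 1) * (2 * x2\<^sup>2 - 1) \<le> (2 * x1\<^sup>2) * (2 * x2\<^sup>2)"
    by (intro mult_mono) auto
  hence "x0\<^sup>2 / (4 * x1\<^sup>2 * x2\<^sup>2) \<le> (2 * x0\<^sup>2 - 1) / ((2 * x1\<^sup>2 - 1) * (2 * x2\<^sup>2 - 1))"
    using \<open>1 \<le> x0\<^sup>2\<close> \<open>1 < x1\<^sup>2\<close> \<open>1 < x2\<^sup>2\<close> by (intro frac_le) auto
  also have "\<dots> \<le> cosh (hex_side (2 * arcosh x0) (2 * arcosh x1) (2 * arcosh x2)) - 1"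
    using hex_side_lower[of "2 * arcosh x1" "2 * arcosh x2" "2 * arcosh x0"] assms
    by (simp add: cosh_double_arcosh)
  finally show ?thesis .
qed

lemma hex_side_double_arcosh_upper:
  fixes x0 x1 x2 c1 c2 :: real
  assumes "1 \<le> x0" "1 < c1" "c1 \<le> x1" "1 < c2" "c2 \<le> x2"
  shows "cosh (hex_side (2 * arcosh x0) (2 * arcosh x1) (2 * arcosh x2)) - 1
    \<le> (2 * x0\<^sup>2 / (x1\<^sup>2 * x2\<^sup>2) + 1 / x1 ^ 4 + 1 / x2 ^ 4)
       / (tanh (2 * arcosh c1) * tanh (2 * arcosh c2))"
proof -
  define a b c where "a = 2 * arcosh x0" and "b = 2 * arcosh x1" and "c = 2 * arcosh x2"
  define \<kappa> where "\<kappa> = tanh (2 * arcosh c1) * tanh (2 * arcosh c2)"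
  have bc: "2 * arcosh c1 \<le> b" "2 * arcosh c2 \<le> c" "0 < 2 * arcosh c1" "0 < 2 * arcosh c2"
    using assms arcosh_real_mono unfolding b_def c_def by auto
  have \<kappa>: "0 < \<kappa>" unfolding \<kappa>_def using bc by simp
  txt \<open>sinh = tanh * cosh, and tanh is increasing.\<close>
  have "\<kappa> * (cosh b * cosh c) = (tanh (2 * arcosh c1) * cosh b) * (tanh (2 * arcosh c2) * cosh c)"
    unfolding \<kappa>_def by (simp add: mult_ac)
  also have "\<dots> \<le> (tanh b * cosh b) * (tanh c * cosh c)"
    using bc by (intro mult_mono) auto
  also have "\<dots> = sinh b * sinh c" by (simp add: tanh_def)
  finally have "cosh (hex_side a b c) - 1
      \<le> (cosh a / (cosh b * cosh c) + 1 / (cosh b)\<^sup>2 + 1 / (cosh c)\<^sup>2) / \<kappa>"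
    using bc \<kappa> by (intro hex_side_upper) auto
  also have "\<dots> \<le> (2 * x0\<^sup>2 / (x1\<^sup>2 * x2\<^sup>2) + 1 / x1 ^ 4 + 1 / x2 ^ 4) / \<kappa>"
  proof (intro divide_right_mono add_mono)
    have sq: "x1\<^sup>2 \<le> cosh b" "x2\<^sup>2 \<le> cosh c" "1 \<le> x1\<^sup>2" "1 \<le> x2\<^sup>2"
      using assms unfolding b_def c_def by (auto simp: cosh_double_arcosh)
    show "cosh a / (cosh b * cosh c) \<le> 2 * x0\<^sup>2 / (x1\<^sup>2 * x2\<^sup>2)"
      using assms sq unfolding a_def by (intro frac_le mult_mono) (auto simp: cosh_double_arcosh)
    have "(x1\<^sup>2)\<^sup>2 \<le> (cosh b)\<^sup>2" "(x2\<^sup>2)\<^sup>2 \<le> (cosh c)\<^sup>2"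
      using sq by (intro power_mono; simp)+
    hence "x1 ^ 4 \<le> (cosh b)\<^sup>2" "x2 ^ 4 \<le> (cosh c)\<^sup>2" by (simp_all flip: power_mult)
    thus "1 / (cosh b)\<^sup>2 \<le> 1 / x1 ^ 4" "1 / (cosh c)\<^sup>2 \<le> 1 / x2 ^ 4"
      using assms by (auto intro!: divide_left_mono)
  qed (use \<kappa> in auto)
  finally show ?thesis unfolding a_def b_def c_def \<kappa>_def .
qed

lemma inverse_pow4_le_exp:
  fixes y a c :: real
  assumes "0 < c" "exp a * c \<le> y"
  shows "1 / y ^ 4 \<le> exp (-4 * a) / c ^ 4"
proof -
  have "1 / y ^ 4 \<le> 1 / (exp a * c) ^ 4"
    using assms order.strict_trans2[OF _ assms(2), of 0]
    by (intro divide_left_mono power_mono mult_pos_pos) auto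
  also have "\<dots> = exp (-4 * a) / c ^ 4"
    by (simp add: power_mult_distrib divide_inverse flip: exp_of_nat_mult exp_minus)
  finally show ?thesis .
qed

section \<open>Functions that are bounded and Lipschitz with respect to a distance\<close>

definition bounded_lipschitz_on :: "('a \<Rightarrow> 'a \<Rightarrow> real) \<Rightarrow> 'a set \<Rightarrow> ('a \<Rightarrow> real) \<Rightarrow> bool" where
  "bounded_lipschitz_on d S g \<longleftrightarrow>
     (\<exists>L. \<forall>u\<in>S. \<forall>v\<in>S. \<bar>g u - g v\<bar> \<le> L * d u v) \<and> (\<exists>C. \<forall>u\<in>S. \<bar>g u\<bar> \<le> C)"

lemma bounded_lipschitz_onE:
  assumes "bounded_lipschitz_on d S g"
  obtains L C where "\<And>u v. u \<in> S \<Longrightarrow> v \<in> S \<Longrightarrow> \<bar>g u - g v\<bar> \<le> L * d u v"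
    and "\<And>u. u \<in> S \<Longrightarrow> \<bar>g u\<bar> \<le> C"
  using assms unfolding bounded_lipschitz_on_def by blast

lemma bounded_lipschitz_onI:
  assumes "\<And>u v. u \<in> S \<Longrightarrow> v \<in> S \<Longrightarrow> \<bar>g u - g v\<bar> \<le> L * d u v"
    and "\<And>u. u \<in> S \<Longrightarrow> \<bar>g u\<bar> \<le> C"
  shows "bounded_lipschitz_on d S g"
  using assms unfolding bounded_lipschitz_on_def by blast

lemma bounded_lipschitz_on_const: "bounded_lipschitz_on d S (\<lambda>_. c)"
  by (rule bounded_lipschitz_onI[where L = 0 and C = "\<bar>c\<bar>"]) auto

lemma bounded_lipschitz_on_add:
  assumes "bounded_lipschitz_on d S g" "bounded_lipschitz_on d S h"
  shows "bounded_lipschitz_on d S (\<lambda>u. g u + h u)"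
proof -
  obtain L1 C1 where L1: "\<And>u v. u \<in> S \<Longrightarrow> v \<in> S \<Longrightarrow> \<bar>g u - g v\<bar> \<le> L1 * d u v"
    and C1: "\<And>u. u \<in> S \<Longrightarrow> \<bar>g u\<bar> \<le> C1" using assms(1) by (elim bounded_lipschitz_onE) blast
  obtain L2 C2 where L2: "\<And>u v. u \<in> S \<Longrightarrow> v \<in> S \<Longrightarrow> \<bar>h u - h v\<bar> \<le> L2 * d u v"
    and C2: "\<And>u. u \<in> S \<Longrightarrow> \<bar>h u\<bar> \<le> C2" using assms(2) by (elim bounded_lipschitz_onE) blast
  show ?thesis
  proof (rule bounded_lipschitz_onI[where L = "L1 + L2" and C = "C1 + C2"])
    fix u v assume "u \<in> S" "v \<in> S"
    thus "\<bar>g u + h u - (g v + h v)\<bar> \<le> (L1 + L2) * d u v"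
      using L1 L2 by (fastforce simp: algebra_simps)
  next
    fix u assume "u \<in> S" thus "\<bar>g u + h u\<bar> \<le> C1 + C2" using C1 C2 by fastforce
  qed
qed

lemma bounded_lipschitz_on_mult:
  assumes "bounded_lipschitz_on d S g" "bounded_lipschitz_on d S h"
  shows "bounded_lipschitz_on d S (\<lambda>u. g u * h u)"
proof -
  obtain L1 C1 where L1: "\<And>u v. u \<in> S \<Longrightarrow> v \<in> S \<Longrightarrow> \<bar>g u - g v\<bar> \<le> L1 * d u v"
    and C1: "\<And>u. u \<in> S \<Longrightarrow> \<bar>g u\<bar> \<le> C1" using assms(1) by (elim bounded_lipschitz_onE) blast
  obtain L2 C2 where L2: "\<And>u v. u \<in> S \<Longrightarrow> v \<in> S \<Longrightarrow> \<bar>h u - h v\<bar> \<le> L2 * d u v"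
    and C2: "\<And>u. u \<in> S \<Longrightarrow> \<bar>h u\<bar> \<le> C2" using assms(2) by (elim bounded_lipschitz_onE) blast
  show ?thesis
  proof (rule bounded_lipschitz_onI[where L = "C1 * L2 + C2 * L1" and C = "C1 * C2"])
    fix u v assume uv: "u \<in> S" "v \<in> S"
    have "g u * h u - g v * h v = g u * (h u - h v) + h v * (g u - g v)"
      by (simp add: algebra_simps)
    hence "\<bar>g u * h u - g v * h v\<bar> \<le> \<bar>g u\<bar> * \<bar>h u - h v\<bar> + \<bar>h v\<bar> * \<bar>g u - g v\<bar>"
      by (simp add: abs_mult[symmetric] abs_triangle_ineq)
    also have "\<dots> \<le> C1 * (L2 * d u v) + C2 * (L1 * d u v)"
      using uv C1 C2 L1 L2 abs_ge_zero order.trans by (intro add_mono mult_mono) blast+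
    finally show "\<bar>g u * h u - g v * h v\<bar> \<le> (C1 * L2 + C2 * L1) * d u v"
      by (simp add: algebra_simps)
  next
    fix u assume "u \<in> S" thus "\<bar>g u * h u\<bar> \<le> C1 * C2"
      using C1 C2 unfolding abs_mult by (intro mult_mono) (auto intro: order.trans[OF abs_ge_zero])
  qed
qed

lemma bounded_lipschitz_on_sum:
  "finite A \<Longrightarrow> (\<And>a. a \<in> A \<Longrightarrow> bounded_lipschitz_on d S (g a))
    \<Longrightarrow> bounded_lipschitz_on d S (\<lambda>u. \<Sum>a\<in>A. g a u)"
  by (induction A rule: finite_induct) (simp_all add: bounded_lipschitz_on_const bounded_lipschitz_on_add)

lemma bounded_lipschitz_on_compose:
  assumes g: "bounded_lipschitz_on d S g" and lower: "\<And>u. u \<in> S \<Longrightarrow> a \<le> g u"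
    and h: "\<And>b. \<exists>K. K-lipschitz_on {a..b} h"
  shows "bounded_lipschitz_on d S (\<lambda>u. h (g u))"
proof -
  obtain L C where L: "\<And>u v. u \<in> S \<Longrightarrow> v \<in> S \<Longrightarrow> \<bar>g u - g v\<bar> \<le> L * d u v"
    and C: "\<And>u. u \<in> S \<Longrightarrow> \<bar>g u\<bar> \<le> C" using g by (elim bounded_lipschitz_onE) blast
  obtain K where K: "K-lipschitz_on {a..max a C} h" using h by blast
  have range: "g u \<in> {a..max a C}" if "u \<in> S" for u using lower C that by fastforce
  have hK: "\<bar>h y - h z\<bar> \<le> K * \<bar>y - z\<bar>" if "y \<in> {a..max a C}" "z \<in> {a..max a C}" for y z
    using lipschitz_onD[OF K that] by (simp add: dist_real_def)
  show ?thesis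
  proof (rule bounded_lipschitz_onI[where L = "K * L" and C = "\<bar>h a\<bar> + K * (max a C - a)"])
    fix u v assume uv: "u \<in> S" "v \<in> S"
    have "\<bar>h (g u) - h (g v)\<bar> \<le> K * \<bar>g u - g v\<bar>" using hK range uv by blast
    also have "\<dots> \<le> K * (L * d u v)" using L uv lipschitz_on_nonneg[OF K] by (intro mult_left_mono) auto
    finally show "\<bar>h (g u) - h (g v)\<bar> \<le> K * L * d u v" by (simp add: mult_ac)
  next
    fix u assume "u \<in> S"
    hence "\<bar>h (g u) - h a\<bar> \<le> K * \<bar>g u - a\<bar>" by (intro hK) (use range in auto)
    also have "\<dots> \<le> K * (max a C - a)"
      using range[OF \<open>u \<in> S\<close>] lipschitz_on_nonneg[OF K] by (intro mult_left_mono) auto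
    finally show "\<bar>h (g u)\<bar> \<le> \<bar>h a\<bar> + K * (max a C - a)" by linarith
  qed
qed

lemma lipschitz_on_interval_if_continuous_deriv:
  fixes h h' :: "real \<Rightarrow> real"
  assumes "\<And>x. x \<in> {a..b} \<Longrightarrow> (h has_real_derivative h' x) (at x)"
    and "continuous_on {a..b} h'"
  shows "\<exists>K. K-lipschitz_on {a..b} h"
proof -
  have "bounded (h' ` {a..b})"
    by (intro compact_imp_bounded compact_continuous_image assms(2) compact_Icc)
  then obtain K where "\<forall>y\<in>h' ` {a..b}. norm y \<le> K"
    unfolding bounded_iff by blast
  hence K: "\<And>x. x \<in> {a..b} \<Longrightarrow> \<bar>h' x\<bar> \<le> K" by simp
  have "(max K 0)-lipschitz_on {a..b} h"
  proof (rule bounded_derivative_imp_lipschitz)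
    fix x assume x: "x \<in> {a..b}"
    show "(h has_derivative (*) (h' x)) (at x within {a..b})"
      by (rule has_field_derivative_imp_has_derivative[OF has_field_derivative_at_within[OF assms(1)[OF x]]])
    show "onorm ((*) (h' x)) \<le> max K 0"
      by (rule onorm_le) (use K[OF x] in \<open>auto simp: abs_mult intro: mult_right_mono\<close>)
  qed auto
  thus ?thesis by blast
qed

lemma lipschitz_on_interval_exp: "\<exists>K. K-lipschitz_on {a..b} (exp :: real \<Rightarrow> real)"
  by (rule lipschitz_on_interval_if_continuous_deriv[where h' = exp])
    (auto intro: DERIV_exp continuous_on_exp continuous_on_id)

lemma lipschitz_on_interval_cosh: "\<exists>K. K-lipschitz_on {a..b} (cosh :: real \<Rightarrow> real)"
  by (rule lipschitz_on_interval_if_continuous_deriv[where h' = sinh])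
    (auto intro!: derivative_eq_intros continuous_on_sinh continuous_on_id)

lemma lipschitz_on_interval_sinh: "\<exists>K. K-lipschitz_on {a..b} (sinh :: real \<Rightarrow> real)"
  by (rule lipschitz_on_interval_if_continuous_deriv[where h' = cosh])
    (auto intro!: derivative_eq_intros continuous_on_cosh continuous_on_id)

lemma lipschitz_on_interval_inverse:
  "0 < a \<Longrightarrow> \<exists>K. K-lipschitz_on {a..b} (inverse :: real \<Rightarrow> real)"
  by (rule lipschitz_on_interval_if_continuous_deriv[where h' = "\<lambda>x. - (inverse x * inverse x)"])
    (auto intro!: derivative_eq_intros continuous_on_minus continuous_on_mult
      continuous_on_inverse continuous_on_id)

lemma lipschitz_on_interval_arcosh:
  "1 < a \<Longrightarrow> \<exists>K. K-lipschitz_on {a..b} (arcosh :: real \<Rightarrow> real)"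
  by (rule lipschitz_on_interval_if_continuous_deriv[where h' = "\<lambda>x. 1 / sqrt (x\<^sup>2 - 1)"])
    (auto intro!: arcosh_real_has_field_derivative continuous_on_divide continuous_on_const
      continuous_on_real_sqrt continuous_on_diff continuous_on_power continuous_on_id
      simp: power2_eq_1_iff)

section \<open>Global flows of a bounded nonnegative locally Lipschitz field\<close>

text \<open>The 0 keeps the maximum well defined when the index set is empty.\<close>

definition sup_dist :: "'i set \<Rightarrow> ('i \<Rightarrow> real) \<Rightarrow> ('i \<Rightarrow> real) \<Rightarrow> real" where
  "sup_dist I u v = Max (insert 0 ((\<lambda>j. \<bar>u j - v j\<bar>) ` I))"

definition nonneg_box :: "'i set \<Rightarrow> real \<Rightarrow> ('i \<Rightarrow> real) set" where
  "nonneg_box I K = {v. \<forall>j\<in>I. 0 \<le> v j \<and> v j \<le> K}"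

lemma sup_dist_ge: "finite I \<Longrightarrow> j \<in> I \<Longrightarrow> \<bar>u j - v j\<bar> \<le> sup_dist I u v"
  unfolding sup_dist_def by (intro Max_ge) auto

lemma sup_dist_nonneg: "finite I \<Longrightarrow> 0 \<le> sup_dist I u v"
  unfolding sup_dist_def by (intro Max_ge) auto

lemma sup_dist_le:
  "finite I \<Longrightarrow> 0 \<le> c \<Longrightarrow> (\<And>j. j \<in> I \<Longrightarrow> \<bar>u j - v j\<bar> \<le> c) \<Longrightarrow> sup_dist I u v \<le> c"
  unfolding sup_dist_def by (intro Max.boundedI) auto

lemma bounded_lipschitz_on_coordinate:
  assumes "finite I" "j \<in> I"
  shows "bounded_lipschitz_on (sup_dist I) (nonneg_box I K) (\<lambda>v. v j)"
  by (rule bounded_lipschitz_onI[where L = 1 and C = K])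
    (use assms sup_dist_ge in \<open>auto simp: nonneg_box_def\<close>)

lemma integral_increment_bounds:
  fixes g :: "real \<Rightarrow> real"
  assumes cont: "continuous_on {0..t} g" and bounds: "\<And>x. x \<in> {0..t} \<Longrightarrow> 0 \<le> g x \<and> g x \<le> B"
    and st: "0 \<le> s" "s \<le> t"
  shows "0 \<le> integral {0..t} g - integral {0..s} g \<and> integral {0..t} g - integral {0..s} g \<le> B * (t - s)"
proof -
  have int: "g integrable_on {0..t}" using cont by (rule integrable_continuous_real)
  have "integral {0..s} g + integral {s..t} g = integral {0..t} g"
    by (rule Henstock_Kurzweil_Integration.integral_combine) (use st int in auto)
  moreover have int': "g integrable_on {s..t}"
    by (rule integrable_subinterval_real[OF int]) (use st in auto)
  hence "0 \<le> integral {s..t} g" using bounds st by (intro integral_nonneg) auto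
  moreover have "integral {s..t} g \<le> integral {s..t} (\<lambda>_. B)"
    using int' bounds st by (intro integral_le) auto
  ultimately show ?thesis using st by (simp add: mult.commute)
qed

lemma integral_monomial:
  fixes t c :: real
  assumes "0 \<le> t"
  shows "integral {0..t} (\<lambda>s. c * s ^ m) = c * t ^ Suc m / Suc m"
proof -
  have "((\<lambda>s. c * s ^ m) has_integral c * t ^ Suc m / Suc m - c * 0 ^ Suc m / Suc m) {0..t}"
  proof (rule fundamental_theorem_of_calculus)
    fix x assume "x \<in> {0..t}"
    have "((\<lambda>s. c * s ^ Suc m / Suc m) has_real_derivative c * (Suc m * x ^ m) / Suc m) (at x within {0..t})"
      by (intro derivative_eq_intros) auto
    thus "((\<lambda>s. c * s ^ Suc m / Suc m) has_vector_derivative c * x ^ m) (at x within {0..t})"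
      by (simp add: has_real_derivative_iff_has_vector_derivative)
  qed (use assms in auto)
  hence "((\<lambda>s. c * s ^ m) has_integral c * t ^ Suc m / Suc m) {0..t}" by simp
  thus ?thesis by (rule integral_unique)
qed

lemma increment_ge_of_deriv_ge:
  fixes f :: "real \<Rightarrow> real"
  assumes "a \<le> b" "continuous_on {a..b} f"
    and "\<And>x. a < x \<Longrightarrow> x < b \<Longrightarrow> \<exists>y. (f has_real_derivative y) (at x) \<and> \<delta> \<le> y"
  shows "\<delta> * (b - a) \<le> f b - f a"
proof -
  have "f a - \<delta> * a \<le> f b - \<delta> * b"
  proof (rule DERIV_nonneg_imp_increasing_open[OF assms(1)])
    fix x assume "a < x" "x < b"
    then obtain y where "(f has_real_derivative y) (at x)" "\<delta> \<le> y" using assms(3) by blast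
    thus "\<exists>y. ((\<lambda>x. f x - \<delta> * x) has_real_derivative y) (at x) \<and> 0 \<le> y"
      by (intro exI[of _ "y - \<delta>"]) (auto intro!: derivative_eq_intros)
  qed (intro continuous_intros assms(2))
  thus ?thesis by (simp add: algebra_simps)
qed

locale nonneg_bounded_field =
  fixes I :: "'i set" and G :: "('i \<Rightarrow> real) \<Rightarrow> 'i \<Rightarrow> real" and M :: real
  assumes finite_index: "finite I"
    and bound_nonneg: "0 \<le> M"
    and field_bounds: "\<And>v i. \<forall>j\<in>I. 0 \<le> v j \<Longrightarrow> i \<in> I \<Longrightarrow> 0 \<le> G v i \<and> G v i \<le> M"
    and field_lipschitz: "\<And>K i. i \<in> I \<Longrightarrow> bounded_lipschitz_on (sup_dist I) (nonneg_box I K) (\<lambda>v. G v i)"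
begin

definition horizon_lipschitz :: "real \<Rightarrow> real \<Rightarrow> bool" where
  "horizon_lipschitz T L \<longleftrightarrow> 0 \<le> L \<and>
     (\<forall>i\<in>I. \<forall>u\<in>nonneg_box I (M * T). \<forall>v\<in>nonneg_box I (M * T). \<bar>G u i - G v i\<bar> \<le> L * sup_dist I u v)"

lemma horizon_lipschitz_exists: "\<exists>L. horizon_lipschitz T L"
proof -
  have "\<forall>i\<in>I. \<exists>L. \<forall>u\<in>nonneg_box I (M * T). \<forall>v\<in>nonneg_box I (M * T).
      \<bar>G u i - G v i\<bar> \<le> L * sup_dist I u v"
    using field_lipschitz unfolding bounded_lipschitz_on_def by blast
  then obtain Lf where Lf: "\<forall>i\<in>I. \<forall>u\<in>nonneg_box I (M * T). \<forall>v\<in>nonneg_box I (M * T).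
      \<bar>G u i - G v i\<bar> \<le> Lf i * sup_dist I u v"
    by (rule bchoice[elim_format]) blast
  have "\<bar>G u i - G v i\<bar> \<le> (\<Sum>j\<in>I. \<bar>Lf j\<bar>) * sup_dist I u v"
    if "i \<in> I" "u \<in> nonneg_box I (M * T)" "v \<in> nonneg_box I (M * T)" for i u v
  proof -
    have "Lf i \<le> (\<Sum>j\<in>I. \<bar>Lf j\<bar>)"
      using that finite_index member_le_sum[of i I "\<lambda>j. \<bar>Lf j\<bar>"] by fastforce
    hence "Lf i * sup_dist I u v \<le> (\<Sum>j\<in>I. \<bar>Lf j\<bar>) * sup_dist I u v"
      using sup_dist_nonneg[OF finite_index] by (rule mult_right_mono)
    thus ?thesis using Lf that by fastforce
  qed
  thus ?thesis unfolding horizon_lipschitz_def by (intro exI[of _ "\<Sum>j\<in>I. \<bar>Lf j\<bar>"]) (auto simp: sum_nonneg)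
qed

definition climbing :: "(real \<Rightarrow> 'i \<Rightarrow> real) \<Rightarrow> bool" where
  "climbing Q \<longleftrightarrow> (\<forall>j\<in>I. Q 0 j = 0) \<and>
     (\<forall>s t. \<forall>j\<in>I. 0 \<le> s \<longrightarrow> s \<le> t \<longrightarrow> 0 \<le> Q t j - Q s j \<and> Q t j - Q s j \<le> M * (t - s))"

lemma climbing_in_box:
  assumes "climbing Q" "0 \<le> s" "s \<le> T"
  shows "Q s \<in> nonneg_box I (M * T)"
proof -
  have "0 \<le> Q s j \<and> Q s j \<le> M * s" if "j \<in> I" for j
    using assms that unfolding climbing_def by force
  moreover have "M * s \<le> M * T" using bound_nonneg assms by (intro mult_left_mono)
  ultimately show ?thesis unfolding nonneg_box_def by force
qed

lemma climbing_sup_dist: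
  assumes "climbing Q" "0 \<le> s" "0 \<le> t"
  shows "sup_dist I (Q s) (Q t) \<le> M * \<bar>s - t\<bar>"
proof (rule sup_dist_le[OF finite_index])
  show "0 \<le> M * \<bar>s - t\<bar>" using bound_nonneg by simp
  fix j assume "j \<in> I"
  hence incr: "0 \<le> Q b j - Q a j \<and> Q b j - Q a j \<le> M * (b - a)" if "0 \<le> a" "a \<le> b" for a b
    using assms(1) that unfolding climbing_def by blast
  show "\<bar>Q s j - Q t j\<bar> \<le> M * \<bar>s - t\<bar>"
    using incr[of s t] incr[of t s] assms(2,3) by (cases "s \<le> t") (auto simp: abs_if)
qed

lemma climbing_field_bounds:
  "climbing Q \<Longrightarrow> 0 \<le> s \<Longrightarrow> i \<in> I \<Longrightarrow> 0 \<le> G (Q s) i \<and> G (Q s) i \<le> M"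
  using climbing_in_box[of Q s s] by (intro field_bounds) (auto simp: nonneg_box_def)

lemma climbing_field_continuous:
  assumes "climbing Q" "i \<in> I"
  shows "continuous_on {0..T} (\<lambda>s. G (Q s) i)"
proof -
  obtain L where L: "horizon_lipschitz T L" using horizon_lipschitz_exists by blast
  have "(L * M)-lipschitz_on {0..T} (\<lambda>s. G (Q s) i)"
  proof (rule lipschitz_onI)
    fix s t assume st: "s \<in> {0..T}" "t \<in> {0..T}"
    have "\<bar>G (Q s) i - G (Q t) i\<bar> \<le> L * sup_dist I (Q s) (Q t)"
      using L assms(2) climbing_in_box[OF assms(1)] st unfolding horizon_lipschitz_def by auto
    also have "\<dots> \<le> L * (M * \<bar>s - t\<bar>)"
      using climbing_sup_dist[OF assms(1)] st L unfolding horizon_lipschitz_def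
      by (intro mult_left_mono) auto
    finally show "dist (G (Q s) i) (G (Q t) i) \<le> L * M * dist s t"
      by (simp add: dist_real_def mult_ac)
  qed (use L bound_nonneg in \<open>auto simp: horizon_lipschitz_def\<close>)
  thus ?thesis by (rule lipschitz_on_continuous_on)
qed

definition picard_step :: "(real \<Rightarrow> 'i \<Rightarrow> real) \<Rightarrow> real \<Rightarrow> 'i \<Rightarrow> real" where
  "picard_step Q t i = integral {0..t} (\<lambda>s. G (Q s) i)"

lemma climbing_picard_step:
  assumes "climbing Q"
  shows "climbing (picard_step Q)"
proof -
  have "0 \<le> picard_step Q t j - picard_step Q s j \<and> picard_step Q t j - picard_step Q s j \<le> M * (t - s)"
    if "j \<in> I" "0 \<le> s" "s \<le> t" for s t j
    unfolding picard_step_def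
    using climbing_field_continuous[OF assms] climbing_field_bounds[OF assms] that
    by (intro integral_increment_bounds) auto
  thus ?thesis unfolding climbing_def by (simp add: picard_step_def)
qed

primrec picard :: "nat \<Rightarrow> real \<Rightarrow> 'i \<Rightarrow> real" where
  "picard 0 = (\<lambda>t i. 0)"
| "picard (Suc k) = picard_step (picard k)"

lemma climbing_picard: "climbing (picard k)"
proof (induction k)
  case 0 show ?case by (simp add: climbing_def bound_nonneg)
qed (simp add: climbing_picard_step)

lemma picard_step_dist_le:
  assumes L: "horizon_lipschitz T L" and Q: "climbing Q" and R: "climbing R"
    and i: "i \<in> I" and t: "t \<in> {0..T}"
    and dist: "\<And>s. s \<in> {0..t} \<Longrightarrow> sup_dist I (Q s) (R s) \<le> g s" and g: "continuous_on {0..t} g"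
  shows "\<bar>picard_step Q t i - picard_step R t i\<bar> \<le> L * integral {0..t} g"
proof -
  have int: "(\<lambda>s. G (Q s) i) integrable_on {0..t}" "(\<lambda>s. G (R s) i) integrable_on {0..t}"
    using climbing_field_continuous[OF Q i] climbing_field_continuous[OF R i]
    by (auto intro: integrable_continuous_real)
  have "norm (G (Q s) i - G (R s) i) \<le> L * g s" if s: "s \<in> {0..t}" for s
  proof -
    have "\<bar>G (Q s) i - G (R s) i\<bar> \<le> L * sup_dist I (Q s) (R s)"
      using L i climbing_in_box[OF Q] climbing_in_box[OF R] s t
      unfolding horizon_lipschitz_def by auto
    also have "\<dots> \<le> L * g s" using L dist[OF s] unfolding horizon_lipschitz_def
      by (intro mult_left_mono) auto
    finally show ?thesis by simp
  qed
  hence "norm (integral {0..t} (\<lambda>s. G (Q s) i - G (R s) i)) \<le> integral {0..t} (\<lambda>s. L * g s)"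
    by (intro integral_norm_bound_integral integrable_diff int)
      (auto intro: integrable_continuous_real continuous_on_mult_left g)
  thus ?thesis unfolding picard_step_def integral_diff[OF int, symmetric] by simp
qed

definition picard_bound :: "real \<Rightarrow> real \<Rightarrow> nat \<Rightarrow> real" where
  "picard_bound L t k = M * L ^ k * t ^ Suc k / fact (Suc k)"

lemma picard_diff_le_bound:
  assumes L: "horizon_lipschitz T L" and "t \<in> {0..T}" "i \<in> I"
  shows "\<bar>picard (Suc k) t i - picard k t i\<bar> \<le> picard_bound L t k"
  using assms(2,3)
proof (induction k arbitrary: t i)
  case 0
  thus ?case using climbing_picard[of 1] unfolding climbing_def picard_bound_def by force
next
  case (Suc k)
  have "\<bar>picard_step (picard (Suc k)) t i - picard_step (picard k) t i\<bar>
      \<le> L * integral {0..t} (\<lambda>s. picard_bound L s k)"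
  proof (rule picard_step_dist_le[OF L climbing_picard climbing_picard Suc.prems(2,1)])
    fix s assume "s \<in> {0..t}"
    thus "sup_dist I (picard (Suc k) s) (picard k s) \<le> picard_bound L s k"
      using Suc.IH Suc.prems(1) L unfolding horizon_lipschitz_def picard_bound_def
      by (intro sup_dist_le[OF finite_index]) (auto simp: bound_nonneg)
  qed (auto simp: picard_bound_def intro!: continuous_on_divide continuous_on_mult
      continuous_on_power continuous_on_id continuous_on_const)
  also have "\<dots> = picard_bound L t (Suc k)"
    using Suc.prems(1) integral_monomial[of t "M * L ^ k / fact (Suc k)" "Suc k"]
    by (simp add: picard_bound_def field_simps)
  finally show ?case by simp
qed

lemma picard_bound_nonneg: "0 \<le> L \<Longrightarrow> 0 \<le> t \<Longrightarrow> 0 \<le> picard_bound L t k"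
  unfolding picard_bound_def using bound_nonneg by simp

lemma picard_bound_mono: "0 \<le> L \<Longrightarrow> 0 \<le> t \<Longrightarrow> t \<le> T \<Longrightarrow> picard_bound L t k \<le> picard_bound L T k"
  unfolding picard_bound_def using bound_nonneg
  by (intro divide_right_mono mult_left_mono power_mono) auto

lemma summable_picard_bound:
  assumes "0 \<le> L" "0 \<le> T"
  shows "summable (picard_bound L T)"
proof (rule summable_comparison_test')
  show "summable (\<lambda>k. M * T * (inverse (fact k) * (L * T) ^ k))"
    by (intro summable_mult summable_exp)
  fix k :: nat
  have "picard_bound L T k = M * T * (L * T) ^ k / fact (Suc k)"
    unfolding picard_bound_def by (simp add: power_mult_distrib mult_ac)
  also have "\<dots> \<le> M * T * (L * T) ^ k / fact k"
    using assms bound_nonneg by (intro divide_left_mono) (auto simp: fact_mono)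
  finally show "norm (picard_bound L T k) \<le> M * T * (inverse (fact k) * (L * T) ^ k)"
    using picard_bound_nonneg[OF assms] by (simp add: divide_inverse mult_ac)
qed

definition picard_tail :: "real \<Rightarrow> real \<Rightarrow> nat \<Rightarrow> real" where
  "picard_tail L T k = suminf (picard_bound L T) - (\<Sum>j<k. picard_bound L T j)"

lemma picard_tail_tendsto_zero:
  assumes "0 \<le> L" "0 \<le> T"
  shows "picard_tail L T \<longlonglongrightarrow> 0"
  using tendsto_diff[OF tendsto_const summable_LIMSEQ[OF summable_picard_bound[OF assms]],
      of "suminf (picard_bound L T)"]
  unfolding picard_tail_def by simp

lemma partial_sum_le_picard_tail:
  assumes "0 \<le> L" "0 \<le> T" "k \<le> m"
  shows "(\<Sum>j\<in>{k..<m}. picard_bound L T j) \<le> picard_tail L T k"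
proof -
  have "(\<Sum>j<k. picard_bound L T j) + (\<Sum>j\<in>{k..<m}. picard_bound L T j) = (\<Sum>j<m. picard_bound L T j)"
    using sum.atLeastLessThan_concat[of 0 k m] assms(3) by (simp add: atLeast0LessThan)
  moreover have "(\<Sum>j<m. picard_bound L T j) \<le> suminf (picard_bound L T)"
    using summable_picard_bound[OF assms(1,2)] picard_bound_nonneg[OF assms(1,2)]
    by (intro sum_le_suminf) auto
  ultimately show ?thesis unfolding picard_tail_def by linarith
qed

lemma picard_tail_nonneg: "0 \<le> L \<Longrightarrow> 0 \<le> T \<Longrightarrow> 0 \<le> picard_tail L T k"
  using partial_sum_le_picard_tail[of L T k k] by simp

lemma picard_diff_le_tail:
  assumes L: "horizon_lipschitz T L" and t: "t \<in> {0..T}" and i: "i \<in> I" and "k \<le> m"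
  shows "\<bar>picard m t i - picard k t i\<bar> \<le> picard_tail L T k"
proof -
  have L0: "0 \<le> L" using L unfolding horizon_lipschitz_def by simp
  have "\<bar>picard m t i - picard k t i\<bar> \<le> (\<Sum>j\<in>{k..<m}. picard_bound L T j)"
    using \<open>k \<le> m\<close>
  proof (induction m rule: dec_induct)
    case (step m)
    have "\<bar>picard (Suc m) t i - picard m t i\<bar> \<le> picard_bound L T m"
      using order.trans[OF picard_diff_le_bound[OF L t i] picard_bound_mono[OF L0]] t by auto
    thus ?case using step by (simp add: sum.atLeastLessThan_Suc)
  qed simp
  also have "\<dots> \<le> picard_tail L T k" using L0 t \<open>k \<le> m\<close> by (intro partial_sum_le_picard_tail) auto
  finally show ?thesis .
qed

definition flow :: "real \<Rightarrow> 'i \<Rightarrow> real" where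
  "flow t i = (\<Sum>k. picard (Suc k) t i - picard k t i)"

lemma picard_tendsto_flow:
  assumes L: "horizon_lipschitz T L" and t: "t \<in> {0..T}" and i: "i \<in> I"
  shows "(\<lambda>k. picard k t i) \<longlonglongrightarrow> flow t i"
proof -
  have L0: "0 \<le> L" using L unfolding horizon_lipschitz_def by simp
  have "summable (\<lambda>k. picard (Suc k) t i - picard k t i)"
  proof (rule summable_comparison_test'[OF summable_picard_bound[OF L0]])
    fix k show "norm (picard (Suc k) t i - picard k t i) \<le> picard_bound L T k"
      using order.trans[OF picard_diff_le_bound[OF L t i] picard_bound_mono[OF L0]] t by auto
  qed (use t in auto)
  from summable_LIMSEQ[OF this] have "(\<lambda>k. picard k t i - picard 0 t i) \<longlonglongrightarrow> flow t i"
    unfolding flow_def sum_lessThan_telescope[of "\<lambda>k. picard k t i"] .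
  thus ?thesis by simp
qed

lemma flow_picard_dist:
  assumes L: "horizon_lipschitz T L" and t: "t \<in> {0..T}" and i: "i \<in> I"
  shows "\<bar>flow t i - picard k t i\<bar> \<le> picard_tail L T k"
proof (rule LIMSEQ_le_const2)
  show "(\<lambda>m. \<bar>picard m t i - picard k t i\<bar>) \<longlonglongrightarrow> \<bar>flow t i - picard k t i\<bar>"
    by (intro tendsto_rabs tendsto_diff picard_tendsto_flow[OF assms] tendsto_const)
  show "\<exists>N. \<forall>m\<ge>N. \<bar>picard m t i - picard k t i\<bar> \<le> picard_tail L T k"
    using picard_diff_le_tail[OF assms] by blast
qed

lemma picard_at_zero: "picard k 0 i = 0"
  by (cases k) (simp_all add: picard_step_def)

lemma flow_at_zero: "flow 0 i = 0"
  unfolding flow_def by (simp add: picard_at_zero picard_step_def)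

lemma climbing_flow: "climbing flow"
  unfolding climbing_def
proof (intro conjI ballI allI impI)
  fix s t :: real and j assume st: "0 \<le> s" "s \<le> t" and j: "j \<in> I"
  obtain L where L: "horizon_lipschitz t L" using horizon_lipschitz_exists by blast
  have lim: "(\<lambda>k. picard k t j - picard k s j) \<longlonglongrightarrow> flow t j - flow s j"
    using st by (intro tendsto_diff picard_tendsto_flow[OF L _ j]) auto
  have bounds: "0 \<le> picard k t j - picard k s j \<and> picard k t j - picard k s j \<le> M * (t - s)" for k
    using climbing_picard[of k] st j unfolding climbing_def by blast
  show "0 \<le> flow t j - flow s j" using LIMSEQ_le_const[OF lim] bounds by blast
  show "flow t j - flow s j \<le> M * (t - s)" using LIMSEQ_le_const2[OF lim] bounds by blast
qed (simp add: flow_at_zero)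

lemma flow_nonneg: "0 \<le> t \<Longrightarrow> j \<in> I \<Longrightarrow> 0 \<le> flow t j"
  using climbing_in_box[OF climbing_flow, of t t] unfolding nonneg_box_def by auto

lemma flow_fixed_point:
  assumes t: "0 \<le> t" and i: "i \<in> I"
  shows "flow t i = picard_step flow t i"
proof -
  obtain L where L: "horizon_lipschitz t L" using horizon_lipschitz_exists by blast
  have L0: "0 \<le> L" using L unfolding horizon_lipschitz_def by simp
  have t': "t \<in> {0..t}" using t by simp
  have "\<bar>flow t i - picard_step flow t i\<bar> \<le> picard_tail L t (Suc k) + L * (t * picard_tail L t k)" for k
  proof -
    have "\<bar>picard_step flow t i - picard_step (picard k) t i\<bar> \<le> L * integral {0..t} (\<lambda>_. picard_tail L t k)"
    proof (rule picard_step_dist_le[OF L climbing_flow climbing_picard i t'])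
      fix s assume "s \<in> {0..t}"
      thus "sup_dist I (flow s) (picard k s) \<le> picard_tail L t k"
        using flow_picard_dist[OF L] picard_tail_nonneg[OF L0 t]
        by (intro sup_dist_le[OF finite_index]) auto
    qed simp
    thus ?thesis using flow_picard_dist[OF L t' i, of "Suc k"] t by simp
  qed
  moreover have "(\<lambda>k. picard_tail L t (Suc k) + L * (t * picard_tail L t k)) \<longlonglongrightarrow> 0 + L * (t * 0)"
    using picard_tail_tendsto_zero[OF L0 t]
    by (intro tendsto_add tendsto_mult tendsto_const) (simp_all add: LIMSEQ_Suc)
  ultimately have "\<bar>flow t i - picard_step flow t i\<bar> \<le> 0"
    by (intro LIMSEQ_le_const) auto
  thus ?thesis by simp
qed

lemma flow_has_derivative:
  assumes t: "0 \<le> t" and i: "i \<in> I"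
  shows "((\<lambda>s. flow s i) has_real_derivative G (flow t) i) (at t within {0..})"
proof -
  have "((\<lambda>x. picard_step flow x i) has_real_derivative G (flow t) i) (at t within {0..t+1})"
    unfolding picard_step_def using t
    by (intro integral_has_real_derivative climbing_field_continuous[OF climbing_flow i]) auto
  hence "((\<lambda>s. flow s i) has_real_derivative G (flow t) i) (at t within {0..t+1})"
    by (rule has_field_derivative_transform_within[of _ _ _ _ 1]) (use t flow_fixed_point i in auto)
  moreover have "at t within {0..} = at t within {0..t+1}"
    by (rule at_within_nhd[of t "{..<t+1}"]) auto
  ultimately show ?thesis by simp
qed

end

section \<open>The combinatorial Yamabe flow\<close>

locale hyperbolic_triangulation =
  fixes n :: nat and F :: "'f set" and E :: "'e set"
    and edge :: "'f \<Rightarrow> nat \<Rightarrow> 'e" and bc :: "'f \<Rightarrow> nat \<Rightarrow> nat" and l0 :: "'e \<Rightarrow> real"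
  assumes triangulation: "ideal_triangulation n F E edge bc"
    and l0_pos: "\<forall>e\<in>E. 0 < l0 e"
begin

abbreviation half_cosh :: "(nat \<Rightarrow> real) \<Rightarrow> 'f \<Rightarrow> nat \<Rightarrow> real" where
  "half_cosh v \<equiv> len_arg l0 edge bc v"

abbreviation \<theta> :: "(nat \<Rightarrow> real) \<Rightarrow> 'f \<Rightarrow> nat \<Rightarrow> real" where
  "\<theta> v \<equiv> theta l0 edge bc v"

abbreviation B :: "(nat \<Rightarrow> real) \<Rightarrow> nat \<Rightarrow> real" where
  "B v \<equiv> bdry_len F l0 edge bc v"

lemma finite_faces: "finite F"
  using triangulation unfolding ideal_triangulation_def by simp

lemma corner_component: "f \<in> F \<Longrightarrow> k < 3 \<Longrightarrow> bc f k \<in> {1..n}"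
  using triangulation unfolding ideal_triangulation_def by auto

lemma component_has_corner:
  assumes "i \<in> {1..n}"
  shows "\<exists>f\<in>F. \<exists>k<3. bc f k = i"
proof -
  have "i \<in> (\<lambda>(f, k). bc f k) ` (F \<times> {..<3})"
    using assms triangulation unfolding ideal_triangulation_def by simp
  thus ?thesis by auto
qed

definition init_half_cosh :: "'f \<Rightarrow> nat \<Rightarrow> real" where
  "init_half_cosh f m = cosh (l0 (edge f m) / 2)"

lemma init_edge_len_pos: "f \<in> F \<Longrightarrow> m < 3 \<Longrightarrow> 0 < l0 (edge f m)"
  using triangulation l0_pos unfolding ideal_triangulation_def by auto

lemma init_half_cosh_gt_one: "f \<in> F \<Longrightarrow> m < 3 \<Longrightarrow> 1 < init_half_cosh f m"
  unfolding init_half_cosh_def using init_edge_len_pos cosh_real_nonneg_less_iff[of 0] by force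

lemma double_arcosh_init_half_cosh:
  assumes "f \<in> F" "m < 3"
  shows "2 * arcosh (init_half_cosh f m) = l0 (edge f m)"
  unfolding init_half_cosh_def using init_edge_len_pos[OF assms] by (simp add: arcosh_cosh_real)

lemma half_cosh_eq:
  "half_cosh v f m = exp (v (bc f ((m + 1) mod 3)) + v (bc f ((m + 2) mod 3))) * init_half_cosh f m"
  unfolding len_arg_def init_half_cosh_def ..

lemma half_cosh_rotate:
  assumes "k < 3"
  shows "half_cosh v f ((k + 1) mod 3)
      = exp (v (bc f ((k + 2) mod 3)) + v (bc f k)) * init_half_cosh f ((k + 1) mod 3)"
    and "half_cosh v f ((k + 2) mod 3)
      = exp (v (bc f k) + v (bc f ((k + 1) mod 3))) * init_half_cosh f ((k + 2) mod 3)"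
proof -
  have "k = 0 \<or> k = 1 \<or> k = 2" using assms by auto
  thus "half_cosh v f ((k + 1) mod 3)
      = exp (v (bc f ((k + 2) mod 3)) + v (bc f k)) * init_half_cosh f ((k + 1) mod 3)"
    "half_cosh v f ((k + 2) mod 3)
      = exp (v (bc f k) + v (bc f ((k + 1) mod 3))) * init_half_cosh f ((k + 2) mod 3)"
    by (auto simp: half_cosh_eq numeral_2_eq_2)
qed

definition nonneg :: "(nat \<Rightarrow> real) \<Rightarrow> bool" where
  "nonneg v \<longleftrightarrow> (\<forall>j\<in>{1..n}. 0 \<le> v j)"

lemma half_cosh_ge_init:
  assumes "nonneg v" "f \<in> F" "m < 3"
  shows "init_half_cosh f m \<le> half_cosh v f m"
proof -
  have "0 \<le> v (bc f ((m + 1) mod 3)) + v (bc f ((m + 2) mod 3))"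
    using assms corner_component unfolding nonneg_def by simp
  thus ?thesis unfolding half_cosh_eq using init_half_cosh_gt_one[OF assms(2,3)] by simp
qed

lemma nonneg_admissible: "nonneg v \<Longrightarrow> admissible F l0 edge bc v"
  unfolding admissible_def using half_cosh_ge_init init_half_cosh_gt_one by fastforce

definition lower_coeff :: "'f \<Rightarrow> nat \<Rightarrow> real" where
  "lower_coeff f k = (init_half_cosh f k)\<^sup>2
     / (4 * (init_half_cosh f ((k + 1) mod 3))\<^sup>2 * (init_half_cosh f ((k + 2) mod 3))\<^sup>2)"

definition upper_coeff :: "'f \<Rightarrow> nat \<Rightarrow> real" where
  "upper_coeff f k = (8 * lower_coeff f k + 1 / init_half_cosh f ((k + 1) mod 3) ^ 4
       + 1 / init_half_cosh f ((k + 2) mod 3) ^ 4)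
     / (tanh (l0 (edge f ((k + 1) mod 3))) * tanh (l0 (edge f ((k + 2) mod 3))))"

lemma init_half_cosh_gt_one_rotated:
  assumes "f \<in> F" "k < 3"
  shows "1 < init_half_cosh f k" "1 < init_half_cosh f ((k + 1) mod 3)"
    "1 < init_half_cosh f ((k + 2) mod 3)"
  using init_half_cosh_gt_one[OF assms(1)] assms(2) by auto

lemma lower_coeff_pos: "f \<in> F \<Longrightarrow> k < 3 \<Longrightarrow> 0 < lower_coeff f k"
  unfolding lower_coeff_def using init_half_cosh_gt_one_rotated[of f k] by simp

lemma upper_coeff_pos:
  assumes "f \<in> F" "k < 3"
  shows "0 < upper_coeff f k"
proof -
  have "0 < l0 (edge f ((k + 1) mod 3))" "0 < l0 (edge f ((k + 2) mod 3))"
    using init_edge_len_pos[OF assms(1)] by auto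
  thus ?thesis unfolding upper_coeff_def
    using lower_coeff_pos[OF assms] init_half_cosh_gt_one_rotated[OF assms]
    by (intro divide_pos_pos add_pos_pos mult_pos_pos) auto
qed

lemma half_cosh_ratio:
  assumes "f \<in> F" "k < 3"
  shows "(half_cosh v f k)\<^sup>2 / (4 * (half_cosh v f ((k + 1) mod 3))\<^sup>2 * (half_cosh v f ((k + 2) mod 3))\<^sup>2)
    = lower_coeff f k * exp (-4 * v (bc f k))"
proof -
  have "exp (-4 * v (bc f k)) = inverse (exp (v (bc f k)) ^ 4)"
    by (simp flip: exp_of_nat_mult exp_minus)
  thus ?thesis unfolding half_cosh_rotate[OF assms(2)] half_cosh_eq[of v f k] lower_coeff_def
    using init_half_cosh_gt_one_rotated[OF assms]
    by (simp add: exp_add power_mult_distrib field_simps power4_eq_xxxx power2_eq_square)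
qed

lemma half_cosh_ge_exp:
  assumes "nonneg v" "f \<in> F" "k < 3"
  shows "exp (v (bc f k)) * init_half_cosh f ((k + 1) mod 3) \<le> half_cosh v f ((k + 1) mod 3)"
    and "exp (v (bc f k)) * init_half_cosh f ((k + 2) mod 3) \<le> half_cosh v f ((k + 2) mod 3)"
proof -
  have "0 \<le> v (bc f ((k + 1) mod 3))" "0 \<le> v (bc f ((k + 2) mod 3))"
    using assms(1) corner_component[OF assms(2)] unfolding nonneg_def by auto
  thus "exp (v (bc f k)) * init_half_cosh f ((k + 1) mod 3) \<le> half_cosh v f ((k + 1) mod 3)"
    "exp (v (bc f k)) * init_half_cosh f ((k + 2) mod 3) \<le> half_cosh v f ((k + 2) mod 3)"
    unfolding half_cosh_rotate[OF assms(3)] using init_half_cosh_gt_one_rotated[OF assms(2,3)] by auto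
qed

lemma half_cosh_gt_one_rotated:
  assumes "admissible F l0 edge bc v" "f \<in> F" "k < 3"
  shows "1 < half_cosh v f k" "1 < half_cosh v f ((k + 1) mod 3)" "1 < half_cosh v f ((k + 2) mod 3)"
  using assms unfolding admissible_def by auto

lemma theta_eq_hex_side:
  "\<theta> v f k = hex_side (2 * arcosh (half_cosh v f k)) (2 * arcosh (half_cosh v f ((k + 1) mod 3)))
      (2 * arcosh (half_cosh v f ((k + 2) mod 3)))"
  unfolding theta_def edge_len_def ..

lemma cosh_theta_lower:
  assumes "admissible F l0 edge bc v" "f \<in> F" "k < 3"
  shows "lower_coeff f k * exp (-4 * v (bc f k)) \<le> cosh (\<theta> v f k) - 1"
  unfolding theta_eq_hex_side half_cosh_ratio[OF assms(2,3), symmetric]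
  using half_cosh_gt_one_rotated[OF assms] by (intro hex_side_double_arcosh_lower) auto

lemma cosh_theta_upper:
  assumes "nonneg v" "f \<in> F" "k < 3"
  shows "cosh (\<theta> v f k) - 1 \<le> upper_coeff f k * exp (-4 * v (bc f k))"
proof -
  define k1 k2 where "k1 = (k + 1) mod 3" and "k2 = (k + 2) mod 3"
  have k12: "k1 < 3" "k2 < 3" unfolding k1_def k2_def by auto
  have "cosh (\<theta> v f k) - 1 \<le> (2 * (half_cosh v f k)\<^sup>2 / ((half_cosh v f k1)\<^sup>2 * (half_cosh v f k2)\<^sup>2)
      + 1 / half_cosh v f k1 ^ 4 + 1 / half_cosh v f k2 ^ 4)
      / (tanh (l0 (edge f k1)) * tanh (l0 (edge f k2)))"
    unfolding theta_eq_hex_side k1_def[symmetric] k2_def[symmetric]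
      double_arcosh_init_half_cosh[OF assms(2) k12(1), symmetric]
      double_arcosh_init_half_cosh[OF assms(2) k12(2), symmetric]
    using half_cosh_gt_one_rotated[OF nonneg_admissible[OF assms(1)] assms(2,3)]
      init_half_cosh_gt_one[OF assms(2) k12(1)] init_half_cosh_gt_one[OF assms(2) k12(2)]
      half_cosh_ge_init[OF assms(1,2) k12(1)] half_cosh_ge_init[OF assms(1,2) k12(2)]
    by (intro hex_side_double_arcosh_upper) auto
  also have "\<dots> \<le> upper_coeff f k * exp (-4 * v (bc f k))"
  proof -
    have "1 / half_cosh v f k1 ^ 4 \<le> exp (-4 * v (bc f k)) / init_half_cosh f k1 ^ 4"
      "1 / half_cosh v f k2 ^ 4 \<le> exp (-4 * v (bc f k)) / init_half_cosh f k2 ^ 4"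
      unfolding k1_def k2_def by (intro inverse_pow4_le_exp half_cosh_ge_exp[OF assms]
          order.strict_trans[OF zero_less_one] init_half_cosh_gt_one_rotated[OF assms(2,3)])+
    moreover have "2 * (half_cosh v f k)\<^sup>2 / ((half_cosh v f k1)\<^sup>2 * (half_cosh v f k2)\<^sup>2)
        = 8 * lower_coeff f k * exp (-4 * v (bc f k))"
      using half_cosh_ratio[OF assms(2,3), of v] unfolding k1_def k2_def by (simp add: field_simps)
    ultimately have "2 * (half_cosh v f k)\<^sup>2 / ((half_cosh v f k1)\<^sup>2 * (half_cosh v f k2)\<^sup>2)
        + 1 / half_cosh v f k1 ^ 4 + 1 / half_cosh v f k2 ^ 4
      \<le> (8 * lower_coeff f k + 1 / init_half_cosh f k1 ^ 4 + 1 / init_half_cosh f k2 ^ 4)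
        * exp (-4 * v (bc f k))"
      by (simp add: algebra_simps divide_inverse)
    moreover have "0 < tanh (l0 (edge f k1)) * tanh (l0 (edge f k2))"
      using init_edge_len_pos[OF assms(2)] k12 by simp
    ultimately show ?thesis unfolding upper_coeff_def k1_def[symmetric] k2_def[symmetric]
      by (simp add: divide_right_mono)
  qed
  finally show ?thesis .
qed

lemma theta_nonneg:
  assumes "admissible F l0 edge bc v" "f \<in> F" "k < 3"
  shows "0 \<le> \<theta> v f k"
  unfolding theta_eq_hex_side using half_cosh_gt_one_rotated[OF assms] by (intro hex_side_nonneg) auto

lemma theta_ge:
  assumes "admissible F l0 edge bc v" "f \<in> F" "k < 3"
  shows "arcosh (1 + lower_coeff f k * exp (-4 * v (bc f k))) \<le> \<theta> v f k"
proof -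
  have "arcosh (1 + lower_coeff f k * exp (-4 * v (bc f k))) \<le> arcosh (cosh (\<theta> v f k))"
    using cosh_theta_lower[OF assms] lower_coeff_pos[OF assms(2,3)] by (intro arcosh_real_mono) auto
  thus ?thesis using theta_nonneg[OF assms] by (simp add: arcosh_cosh_real)
qed

lemma theta_le:
  assumes "nonneg v" "f \<in> F" "k < 3"
  shows "\<theta> v f k \<le> arcosh (1 + upper_coeff f k * exp (-4 * v (bc f k)))"
proof -
  have "arcosh (cosh (\<theta> v f k)) \<le> arcosh (1 + upper_coeff f k * exp (-4 * v (bc f k)))"
    using cosh_theta_upper[OF assms] by (intro arcosh_real_mono) (auto simp: cosh_real_ge_1)
  thus ?thesis using theta_nonneg[OF nonneg_admissible[OF assms(1)] assms(2,3)] by (simp add: arcosh_cosh_real)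
qed

lemma theta_le_bdry_len:
  assumes "admissible F l0 edge bc v" "f \<in> F" "k < 3"
  shows "\<theta> v f k \<le> B v (bc f k)"
proof -
  have "(if bc f k = bc f k then \<theta> v f k else 0) \<le> (\<Sum>k'<3. if bc f k' = bc f k then \<theta> v f k' else 0)"
    by (rule member_le_sum) (use assms theta_nonneg[OF assms(1,2)] in auto)
  hence "\<theta> v f k \<le> (\<Sum>k'<3. if bc f k' = bc f k then \<theta> v f k' else 0)" by simp
  also have "\<dots> \<le> B v (bc f k)"
    unfolding bdry_len_def using assms finite_faces theta_nonneg[OF assms(1)]
    by (intro member_le_sum[of f]) (auto intro!: sum_nonneg)
  finally show ?thesis .
qed

lemma bdry_len_nonneg: "admissible F l0 edge bc v \<Longrightarrow> 0 \<le> B v i"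
  unfolding bdry_len_def by (auto intro!: sum_nonneg theta_nonneg)

definition bdry_bound :: real where
  "bdry_bound = (\<Sum>f\<in>F. \<Sum>k<3. arcosh (1 + upper_coeff f k))"

lemma bdry_len_le_bound:
  assumes "nonneg v"
  shows "B v i \<le> bdry_bound"
  unfolding bdry_len_def bdry_bound_def
proof (intro sum_mono)
  fix f k assume f: "f \<in> F" and "k \<in> {..<3::nat}"
  hence k: "k < 3" by simp
  have "exp (-4 * v (bc f k)) \<le> 1"
    using assms corner_component[OF f] k unfolding nonneg_def by auto
  hence "arcosh (1 + upper_coeff f k * exp (-4 * v (bc f k))) \<le> arcosh (1 + upper_coeff f k)"
    using upper_coeff_pos[OF f k] by (intro arcosh_real_mono) (auto simp: mult_left_le)
  hence "\<theta> v f k \<le> arcosh (1 + upper_coeff f k)"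
    using theta_le[OF assms f k] by simp
  moreover have "0 \<le> arcosh (1 + upper_coeff f k)" using upper_coeff_pos[OF f k] by simp
  ultimately show "(if bc f k = i then \<theta> v f k else 0) \<le> arcosh (1 + upper_coeff f k)" by simp
qed

abbreviation box :: "real \<Rightarrow> (nat \<Rightarrow> real) set" where
  "box K \<equiv> nonneg_box {1..n} K"

abbreviation lipschitz_on_box :: "real \<Rightarrow> ((nat \<Rightarrow> real) \<Rightarrow> real) \<Rightarrow> bool" where
  "lipschitz_on_box K g \<equiv> bounded_lipschitz_on (sup_dist {1..n}) (box K) g"

lemma box_nonneg: "v \<in> box K \<Longrightarrow> nonneg v"
  unfolding nonneg_box_def nonneg_def by auto

lemma edge_len_ge_init:
  assumes "nonneg v" "f \<in> F" "m < 3"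
  shows "l0 (edge f m) \<le> edge_len l0 edge bc v f m"
  unfolding edge_len_def double_arcosh_init_half_cosh[OF assms(2,3), symmetric]
  using half_cosh_ge_init[OF assms] init_half_cosh_gt_one[OF assms(2,3)] by (simp add: arcosh_real_mono)

lemma lipschitz_half_cosh:
  assumes "f \<in> F" "m < 3"
  shows "lipschitz_on_box K (\<lambda>v. half_cosh v f m)"
proof -
  have j: "bc f ((m + 1) mod 3) \<in> {1..n}" "bc f ((m + 2) mod 3) \<in> {1..n}"
    using corner_component[OF assms(1)] by auto
  have "lipschitz_on_box K (\<lambda>v. v (bc f ((m + 1) mod 3)) + v (bc f ((m + 2) mod 3)))"
    using j by (intro bounded_lipschitz_on_add bounded_lipschitz_on_coordinate) auto
  hence "lipschitz_on_box K (\<lambda>v. exp (v (bc f ((m + 1) mod 3)) + v (bc f ((m + 2) mod 3))))"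
    by (rule bounded_lipschitz_on_compose[where a = 0, OF _ _ lipschitz_on_interval_exp])
      (use j in \<open>auto simp: nonneg_box_def\<close>)
  thus ?thesis unfolding half_cosh_eq by (rule bounded_lipschitz_on_mult[OF _ bounded_lipschitz_on_const])
qed

lemma lipschitz_edge_len:
  assumes "f \<in> F" "m < 3"
  shows "lipschitz_on_box K (\<lambda>v. edge_len l0 edge bc v f m)"
  unfolding edge_len_def
proof (rule bounded_lipschitz_on_mult[OF bounded_lipschitz_on_const])
  show "lipschitz_on_box K (\<lambda>v. arcosh (half_cosh v f m))"
    using half_cosh_ge_init[OF box_nonneg assms] init_half_cosh_gt_one[OF assms]
    by (intro bounded_lipschitz_on_compose[OF lipschitz_half_cosh[OF assms]] lipschitz_on_interval_arcosh)
      auto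
qed

lemma lipschitz_cosh_sinh_edge_len:
  assumes "f \<in> F" "m < 3"
  shows "lipschitz_on_box K (\<lambda>v. cosh (edge_len l0 edge bc v f m))"
    and "lipschitz_on_box K (\<lambda>v. sinh (edge_len l0 edge bc v f m))"
  using edge_len_ge_init[OF box_nonneg assms]
  by (intro bounded_lipschitz_on_compose[OF lipschitz_edge_len[OF assms]]
      lipschitz_on_interval_cosh lipschitz_on_interval_sinh; blast)+

lemma cosh_theta_ge_on_box:
  assumes "f \<in> F" "k < 3" "v \<in> box K"
  shows "1 + lower_coeff f k * exp (-4 * K) \<le> cosh (\<theta> v f k)"
proof -
  have "v (bc f k) \<le> K" using assms corner_component[OF assms(1,2)] unfolding nonneg_box_def by auto
  hence "lower_coeff f k * exp (-4 * K) \<le> lower_coeff f k * exp (-4 * v (bc f k))"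
    using lower_coeff_pos[OF assms(1,2)] by simp
  also have "\<dots> \<le> cosh (\<theta> v f k) - 1"
    using cosh_theta_lower[OF nonneg_admissible[OF box_nonneg[OF assms(3)]] assms(1,2)] .
  finally show ?thesis by simp
qed

lemma lipschitz_theta:
  assumes f: "f \<in> F" and k: "k < 3"
  shows "lipschitz_on_box K (\<lambda>v. \<theta> v f k)"
proof -
  define k1 k2 where "k1 = (k + 1) mod 3" and "k2 = (k + 2) mod 3"
  have k12: "k1 < 3" "k2 < 3" unfolding k1_def k2_def by auto
  let ?l = "\<lambda>m v. edge_len l0 edge bc v f m"
  note cosh = lipschitz_cosh_sinh_edge_len(1)[OF f] and sinh = lipschitz_cosh_sinh_edge_len(2)[OF f]
  have pos: "0 < l0 (edge f k1)" "0 < l0 (edge f k2)" using init_edge_len_pos[OF f] k12 by auto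
  have "sinh (l0 (edge f k1)) * sinh (l0 (edge f k2)) \<le> sinh (?l k1 v) * sinh (?l k2 v)"
    if "v \<in> box K" for v
    using edge_len_ge_init[OF box_nonneg[OF that] f k12(1)] edge_len_ge_init[OF box_nonneg[OF that] f k12(2)]
      pos by (intro mult_mono) auto
  moreover have "0 < sinh (l0 (edge f k1)) * sinh (l0 (edge f k2))" using pos by simp
  ultimately have "lipschitz_on_box K (\<lambda>v. inverse (sinh (?l k1 v) * sinh (?l k2 v)))"
    by (intro bounded_lipschitz_on_compose[OF bounded_lipschitz_on_mult[OF sinh sinh]]
        lipschitz_on_interval_inverse) (use k12 in auto)
  hence arg: "lipschitz_on_box K
      (\<lambda>v. (cosh (?l k v) + cosh (?l k1 v) * cosh (?l k2 v)) / (sinh (?l k1 v) * sinh (?l k2 v)))"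
    unfolding divide_inverse
    by (rule bounded_lipschitz_on_mult[OF bounded_lipschitz_on_add[OF cosh[OF k]
          bounded_lipschitz_on_mult[OF cosh[OF k12(1)] cosh[OF k12(2)]]]])
  have "1 + lower_coeff f k * exp (-4 * K)
      \<le> (cosh (?l k v) + cosh (?l k1 v) * cosh (?l k2 v)) / (sinh (?l k1 v) * sinh (?l k2 v))"
    if v: "v \<in> box K" for v
    using cosh_theta_ge_on_box[OF f k v] edge_len_ge_init[OF box_nonneg[OF v] f] pos k12
    unfolding theta_def k1_def[symmetric] k2_def[symmetric]
    by (subst (asm) hex_side_cosh) (auto intro: less_le_trans)
  hence "lipschitz_on_box K (\<lambda>v. hex_side (?l k v) (?l k1 v) (?l k2 v))"
    unfolding hex_side_def using lower_coeff_pos[OF f k]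
    by (intro bounded_lipschitz_on_compose[OF arg] lipschitz_on_interval_arcosh) auto
  thus ?thesis unfolding theta_def k1_def k2_def .
qed

lemma lipschitz_bdry_len: "lipschitz_on_box K (\<lambda>v. B v i)"
  unfolding bdry_len_def
proof (intro bounded_lipschitz_on_sum finite_faces finite_lessThan)
  fix f k assume "f \<in> F" "k \<in> {..<3::nat}"
  thus "lipschitz_on_box K (\<lambda>v. if bc f k = i then \<theta> v f k else 0)"
    by (cases "bc f k = i") (use lipschitz_theta[of f k K] bounded_lipschitz_on_const in auto)
qed

lemma yamabe_solution_exists: "\<exists>w. yamabe_solution n F l0 edge bc w"
proof -
  interpret nonneg_bounded_field "{1..n}" "bdry_len F l0 edge bc" bdry_bound
  proof
    show "0 \<le> bdry_bound"
      unfolding bdry_bound_def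
    proof (intro sum_nonneg arcosh_nonneg_real)
      fix f k assume "f \<in> F" "k \<in> {..<3::nat}"
      thus "1 \<le> 1 + upper_coeff f k" using upper_coeff_pos[of f k] by simp
    qed
    fix v :: "nat \<Rightarrow> real" and i assume "\<forall>j\<in>{1..n}. 0 \<le> v j"
    hence "nonneg v" unfolding nonneg_def .
    thus "0 \<le> B v i \<and> B v i \<le> bdry_bound"
      using bdry_len_nonneg[OF nonneg_admissible] bdry_len_le_bound by blast
  qed (simp_all only: finite_atLeastAtMost lipschitz_bdry_len)
  have "yamabe_solution n F l0 edge bc flow"
    unfolding yamabe_solution_def
    using flow_at_zero flow_has_derivative flow_nonneg
    by (auto intro: nonneg_admissible simp: nonneg_def)
  thus ?thesis by blast
qed

lemma solution_increment_ge:
  assumes sol: "yamabe_solution n F l0 edge bc u" and i: "i \<in> {1..n}" and ab: "0 \<le> a" "a \<le> b"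
    and \<delta>: "\<And>t. 0 \<le> t \<Longrightarrow> \<delta> \<le> B (u t) i"
  shows "\<delta> * (b - a) \<le> u b i - u a i"
proof -
  have der: "((\<lambda>s. u s i) has_real_derivative B (u t) i) (at t within {0..})" if "0 \<le> t" for t
    using sol i that unfolding yamabe_solution_def by blast
  show ?thesis
  proof (rule increment_ge_of_deriv_ge[OF ab(2)])
    have "continuous_on {0..} (\<lambda>s. u s i)"
      unfolding continuous_on_eq_continuous_within using DERIV_continuous[OF der] by blast
    thus "continuous_on {a..b} (\<lambda>s. u s i)" by (rule continuous_on_subset) (use ab in auto)
    fix x assume "a < x" "x < b"
    moreover have "at x within {0..} = at x within UNIV"
      by (rule at_within_nhd[of x "{0<..}"]) (use \<open>a < x\<close> ab in auto)
    ultimately show "\<exists>y. ((\<lambda>s. u s i) has_real_derivative y) (at x) \<and> \<delta> \<le> y"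
      using der[of x] \<delta>[of x] ab by auto
  qed
qed

lemma solution_mono:
  assumes sol: "yamabe_solution n F l0 edge bc u" and "i \<in> {1..n}" "0 \<le> a" "a \<le> b"
  shows "u a i \<le> u b i"
proof -
  have "0 \<le> B (u t) i" if "0 \<le> t" for t
    using sol that bdry_len_nonneg unfolding yamabe_solution_def by blast
  from solution_increment_ge[OF assms this] show ?thesis by simp
qed

lemma solution_nonneg:
  assumes sol: "yamabe_solution n F l0 edge bc u" and "0 \<le> t"
  shows "nonneg (u t)"
  using solution_mono[OF sol _ order.refl \<open>0 \<le> t\<close>] sol
  unfolding nonneg_def yamabe_solution_def by force

text \<open>While w_i stays below Z, the lower bound for the angles keeps B_i above a positive
  constant, which forces w_i past Z in finite time.\<close>

lemma solution_unbounded: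
  assumes sol: "yamabe_solution n F l0 edge bc u" and i: "i \<in> {1..n}"
  shows "\<exists>t\<ge>0. Z < u t i"
proof (rule ccontr)
  assume "\<not> ?thesis"
  hence le: "u t i \<le> Z" if "0 \<le> t" for t using that by force
  obtain f k where fk: "f \<in> F" "k < 3" "bc f k = i" using component_has_corner[OF i] by blast
  define \<delta> where "\<delta> = arcosh (1 + lower_coeff f k * exp (-4 * Z))"
  have \<delta>: "0 < \<delta>" unfolding \<delta>_def using lower_coeff_pos[OF fk(1,2)] by simp
  have "\<delta> \<le> B (u t) i" if t: "0 \<le> t" for t
  proof -
    have adm: "admissible F l0 edge bc (u t)" using sol t unfolding yamabe_solution_def by blast
    have "\<delta> \<le> arcosh (1 + lower_coeff f k * exp (-4 * u t i))"
      unfolding \<delta>_def using le[OF t] lower_coeff_pos[OF fk(1,2)] by (intro arcosh_real_mono) auto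
    also have "\<dots> \<le> B (u t) i"
      using theta_ge[OF adm fk(1,2)] theta_le_bdry_len[OF adm fk(1,2)] fk(3) by simp
    finally show ?thesis .
  qed
  from solution_increment_ge[OF sol i order.refl _ this, of "(\<bar>Z\<bar> + 1) / \<delta>"]
  have "\<bar>Z\<bar> + 1 \<le> u ((\<bar>Z\<bar> + 1) / \<delta>) i"
    using \<delta> sol i unfolding yamabe_solution_def by simp
  thus False using le[of "(\<bar>Z\<bar> + 1) / \<delta>"] \<delta> by simp
qed

lemma solution_tendsto_infinity:
  assumes sol: "yamabe_solution n F l0 edge bc u" and i: "i \<in> {1..n}"
  shows "filterlim (\<lambda>t. u t i) at_top at_top"
  unfolding filterlim_at_top eventually_at_top_linorder
proof
  fix Z
  obtain t0 where "0 \<le> t0" "Z < u t0 i" using solution_unbounded[OF sol i] by blast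
  thus "\<exists>t0. \<forall>t\<ge>t0. Z \<le> u t i"
    using solution_mono[OF sol i] by (meson dual_order.trans less_imp_le)
qed

lemma theta_tendsto_zero:
  assumes sol: "yamabe_solution n F l0 edge bc u" and f: "f \<in> F" and k: "k < 3"
  shows "((\<lambda>t. \<theta> (u t) f k) \<longlongrightarrow> 0) at_top"
proof (rule tendsto_sandwich)
  show "eventually (\<lambda>t. 0 \<le> \<theta> (u t) f k) at_top"
    using sol f k unfolding yamabe_solution_def eventually_at_top_linorder
    by (blast intro: theta_nonneg)
  show "eventually (\<lambda>t. \<theta> (u t) f k \<le> arcosh (1 + upper_coeff f k * exp (-4 * u t (bc f k)))) at_top"
    using theta_le[OF solution_nonneg[OF sol] f k] unfolding eventually_at_top_linorder by blast
  have "filterlim (\<lambda>t. 4 * u t (bc f k)) at_top at_top"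
    by (rule filterlim_tendsto_pos_mult_at_top[OF tendsto_const _
          solution_tendsto_infinity[OF sol corner_component[OF f k]]]) simp
  hence "filterlim (\<lambda>t. -4 * u t (bc f k)) at_bot at_top"
    by (simp add: filterlim_uminus_at_top)
  hence "((\<lambda>t. 1 + upper_coeff f k * exp (-4 * u t (bc f k))) \<longlongrightarrow> 1 + upper_coeff f k * 0) at_top"
    by (intro tendsto_intros filterlim_compose[OF exp_at_bot])
  hence "((\<lambda>t. arcosh (1 + upper_coeff f k * exp (-4 * u t (bc f k)))) \<longlongrightarrow> arcosh 1) at_top"
    using upper_coeff_pos[OF f k] by (intro tendsto_arcosh_strong) (auto intro: always_eventually)
  thus "((\<lambda>t. arcosh (1 + upper_coeff f k * exp (-4 * u t (bc f k)))) \<longlongrightarrow> 0) at_top"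
    by simp
qed simp

lemma bdry_len_tendsto_zero:
  assumes "yamabe_solution n F l0 edge bc u"
  shows "((\<lambda>t. B (u t) i) \<longlongrightarrow> 0) at_top"
proof -
  have "((\<lambda>t. \<Sum>f\<in>F. \<Sum>k<3. if bc f k = i then \<theta> (u t) f k else 0)
      \<longlongrightarrow> (\<Sum>f\<in>F. \<Sum>k<(3::nat). 0)) at_top"
  proof (intro tendsto_sum)
    fix f k assume "f \<in> F" "k \<in> {..<3::nat}"
    thus "((\<lambda>t. if bc f k = i then \<theta> (u t) f k else 0) \<longlongrightarrow> 0) at_top"
      using theta_tendsto_zero[OF assms, of f k] by (cases "bc f k = i") auto
  qed
  thus ?thesis unfolding bdry_len_def by simp
qed

lemma edge_len_tendsto_infinity:
  assumes sol: "yamabe_solution n F l0 edge bc u" and f: "f \<in> F" and m: "m < 3"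
  shows "filterlim (\<lambda>t. edge_len l0 edge bc (u t) f m) at_top at_top"
proof -
  define i j where "i = bc f ((m + 1) mod 3)" and "j = bc f ((m + 2) mod 3)"
  have ij: "i \<in> {1..n}" "j \<in> {1..n}" unfolding i_def j_def using corner_component[OF f] by auto
  have "exp (u t i) \<le> half_cosh (u t) f m" if "0 \<le> t" for t
  proof -
    have "exp (u t i) * 1 \<le> exp (u t i + u t j) * init_half_cosh f m"
      using solution_nonneg[OF sol that] ij init_half_cosh_gt_one[OF f m]
      unfolding nonneg_def by (intro mult_mono) auto
    thus ?thesis unfolding half_cosh_eq i_def j_def by simp
  qed
  hence "filterlim (\<lambda>t. half_cosh (u t) f m) at_top at_top"
    by (intro filterlim_at_top_mono[OF filterlim_compose[OF exp_at_top solution_tendsto_infinity[OF sol ij(1)]]])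
      (auto simp: eventually_at_top_linorder)
  hence "filterlim (\<lambda>t. arcosh (half_cosh (u t) f m)) at_top at_top"
    by (rule filterlim_compose[OF arcosh_real_at_top])
  from filterlim_tendsto_pos_mult_at_top[OF tendsto_const _ this, of 2]
  show ?thesis unfolding edge_len_def by simp
qed

end

theorem theorem3:
  fixes n :: nat and F :: "'f set" and E :: "'e set"
    and edge :: "'f \<Rightarrow> nat \<Rightarrow> 'e" and bc :: "'f \<Rightarrow> nat \<Rightarrow> nat" and l0 :: "'e \<Rightarrow> real"
  assumes "ideal_triangulation n F E edge bc"
    and "\<forall>e\<in>E. l0 e > 0"
  shows "(\<exists>w. yamabe_solution n F l0 edge bc w) \<and>
         (\<forall>w. yamabe_solution n F l0 edge bc w \<longrightarrow>
            (\<forall>i\<in>{1..n}. ((\<lambda>t. bdry_len F l0 edge bc (w t) i) \<longlongrightarrow> 0) at_top) \<and>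
            (\<forall>f\<in>F. \<forall>k<3. ((\<lambda>t. theta l0 edge bc (w t) f k) \<longlongrightarrow> 0) at_top) \<and>
            (\<forall>f\<in>F. \<forall>m<3. filterlim (\<lambda>t. edge_len l0 edge bc (w t) f m) at_top at_top))"
proof -
  interpret hyperbolic_triangulation n F E edge bc l0
    using assms by unfold_locales
  show ?thesis
    using yamabe_solution_exists bdry_len_tendsto_zero theta_tendsto_zero edge_len_tendsto_infinity
    by blast
qed

end
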